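(* Let $\mathcal K=(AP,W,R,L,w_I)$ be a Kripke structure and let $\mathcal U_{\mathcal K}=(AP,W^\bullet,R^\bullet,L^\bullet,\varepsilon)$ be its tree-like unwinding. Then the relation $\{(w^\bullet,\mathrm{pr}(w^\bullet)) : w^\bullet\in W^\bullet\}\subseteq W^\bullet\times W$ is a cycle-bisimulation relation between $\mathcal U_{\mathcal K}$ and $\mathcal K$. Hence $\mathcal K$ and $\mathcal U_{\mathcal K}$ satisfy exactly the same CTL*$_{cd}$ state formulas (i.e., $\mathcal K\models\varphi$ iff $\mathcal U_{\mathcal K}\models\varphi$).
   Context: A Kripke structure over a finite set $AP$ of atomic propositions is a tuple $\mathcal K=(AP,W,R,L,w_I)$ where $W$ is a countable non-empty set of worlds, $w_I\in W$ is the initial world, $R\subseteq W\times W$ is a left-total transition relation (every world has at least one $R$-successor), and $L:W\to 2^{AP}$ is a labelling function. A path is an infinite sequence $\pi=\pi_0\pi_1\cdots$ of worlds with $(\pi_i,\pi_{i+1})\in R$ for all $i\in\mathbb N$; $\mathrm{Pth}(w)$ is the set of paths with $\pi_0=w$. A path $\pi$ is a cycle if for every $i\in\mathbb N$ there is $j>i$ with $\pi_j=\pi_0$ (i.e. $\pi_0$ occurs infinitely often in $\pi$); $\mathrm{Cyc}(w)$ is the set of cycles with $\pi_0=w$. Syntax of CTL*$_{cd}$: state formulas $\varphi::=p\mid\neg\varphi\mid\varphi\wedge\varphi\mid\varphi\vee\varphi\mid \mathsf E\psi\mid\mathsf A\psi\mid\mathsf E^{c}\psi\mid\mathsf A^{c}\psi$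 with $p\in AP$; path formulas $\psi::=\varphi\mid\neg\psi\mid\psi\wedge\psi\mid\psi\vee\psi\mid\mathsf X\psi\mid\psi\,\mathsf U\,\psi$. Semantics: $\mathcal K,w\models p$ iff $p\in L(w)$; Boolean connectives as usual; $\mathcal K,w\models\mathsf E\psi$ iff some $\pi\in\mathrm{Pth}(w)$ has $\mathcal K,\pi,0\models\psi$; $\mathcal K,w\models\mathsf A\psi$ iff every $\pi\in\mathrm{Pth}(w)$ has $\mathcal K,\pi,0\models\psi$; $\mathcal K,w\models\mathsf E^{c}\psi$ iff some $\pi\in\mathrm{Cyc}(w)$ has $\mathcal K,\pi,0\models\psi$; $\mathcal K,w\models\mathsf A^{c}\psi$ iff every $\pi\in\mathrm{Cyc}(w)$ has $\mathcal K,\pi,0\models\psi$. For paths: $\mathcal K,\pi,i\models\varphi$ (state formula) iff $\mathcal K,\pi_i\models\varphi$; Boolean connectives as usual; $\mathcal K,\pi,i\models\mathsf X\psi$ iff $\mathcal K,\pi,i+1\models\psi$; $\mathcal K,\pi,i\models\psi_1\mathsf U\psi_2$ iff there is $k\ge0$ with $\mathcal K,\pi,i+k\models\psi_2$ and $\mathcal K,\pi,i+j\models\psi_1$ for all $0\le j<k$. $\mathcal K\models\varphi$ iff $\mathcal K,w_I\models\varphi$. Cycle-bisimulation: for Kripke structures $\mathcal K_1=(AP,W_1,R_1,L_1,w_{I,1})$, $\mathcal K_2=(AP,W_2,R_2,L_2,w_{I,2})$, a relation $B\subseteq W_1\times W_2$ is a cycle-bisimulation relation if $(w_{I,1},w_{I,2})\in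 B$ and for all $(w_1,w_2)\in B$: (a) $L_1(w_1)=L_2(w_2)$; (b) for every $v_1$ with $(w_1,v_1)\in R_1$ there is $v_2$ with $(w_2,v_2)\in R_2$ and $(v_1,v_2)\in B$; (c) for every $v_2$ with $(w_2,v_2)\in R_2$ there is $v_1$ with $(w_1,v_1)\in R_1$ and $(v_1,v_2)\in B$; (d) for every cycle $\pi_1$ of $\mathcal K_1$ with first world $w_1$ there is a cycle $\pi_2$ of $\mathcal K_2$ with first world $w_2$ such that $((\pi_1)_i,(\pi_2)_i)\in B$ for all $i$; (e) symmetrically, for every cycle $\pi_2$ of $\mathcal K_2$ with first world $w_2$ there is a cycle $\pi_1$ of $\mathcal K_1$ with first world $w_1$ such that $((\pi_1)_i,(\pi_2)_i)\in B$ for all $i$. Tree-like unwinding: let $\mathsf{new},\mathsf{cycle}$ be two fresh constants. The projection map $\mathrm{pr}:(W\times\{\mathsf{new},\mathsf{cycle}\})^*\to W$ is given by $\mathrm{pr}(\varepsilon)=w_I$ and $\mathrm{pr}(w^\bullet)=w$ if the last letter of $w^\bullet\neq\varepsilon$ is $(w,\alpha)$. A sequence $w^\bullet$ admits $u^\bullet$ as its initial cycle state if $w^\bullet=u^\bullet\,(v_1,\mathsf{new})(v_2,\mathsf{cycle})\cdots(v_k,\mathsf{cycle})$ for some $k\ge1$ and worlds $v_1,\dots,v_k\in W$ (i.e., $u^\bullet$ is the parent of the closest ancestor-or-self of $w^\bullet$ whose last letter carries $\mathsf{new}$; every $w^\bullet\neq\varepsilon$ has exactly one, $\varepsilon$ has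 none). Define a relation $R^\bullet$ on $(W\times\{\mathsf{new},\mathsf{cycle}\})^*$: for every $w^\bullet$ and every $v$ with $(\mathrm{pr}(w^\bullet),v)\in R$: $(w^\bullet,w^\bullet(v,\mathsf{new}))\in R^\bullet$ (a forward edge); if $w^\bullet$ has initial cycle state $u^\bullet$ with $\mathrm{pr}(u^\bullet)\neq v$, then $(w^\bullet,w^\bullet(v,\mathsf{cycle}))\in R^\bullet$ (a forward edge); if $w^\bullet$ has initial cycle state $u^\bullet$ with $\mathrm{pr}(u^\bullet)=v$, then $(w^\bullet,u^\bullet)\in R^\bullet$ (a back edge); no other pairs are in $R^\bullet$. The tree-like unwinding $\mathcal U_{\mathcal K}=(AP,W^\bullet,R^\bullet,L^\bullet,\varepsilon)$ has as worlds $W^\bullet$ the sequences reachable from $\varepsilon$ via $R^\bullet$, initial world $\varepsilon$, $R^\bullet$ restricted to $W^\bullet$, and $L^\bullet(w^\bullet)=L(\mathrm{pr}(w^\bullet))$. *)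

theory Defs
  imports Main "HOL-Library.Countable_Set"
begin

record ('ap, 'w) kripke =
  AP :: "'ap set"
  W :: "'w set"
  R :: "('w \<times> 'w) set"
  L :: "'w \<Rightarrow> 'ap set"
  init :: 'w

definition is_kripke :: "('ap, 'w) kripke \<Rightarrow> bool" where
  "is_kripke K \<longleftrightarrow>
     finite (AP K) \<and> countable (W K) \<and> W K \<noteq> {} \<and> init K \<in> W K \<and>
     R K \<subseteq> W K \<times> W K \<and> (\<forall>w \<in> W K. \<exists>v. (w, v) \<in> R K) \<and>
     (\<forall>w \<in> W K. L K w \<subseteq> AP K)"

definition Pth :: "('ap, 'w) kripke \<Rightarrow> 'w \<Rightarrow> (nat \<Rightarrow> 'w) set" where
  "Pth K w = {\<pi>. \<pi> 0 = w \<and> (\<forall>i. (\<pi> i, \<pi> (Suc i)) \<in> R K)}"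

definition is_cycle :: "('ap, 'w) kripke \<Rightarrow> (nat \<Rightarrow> 'w) \<Rightarrow> bool" where
  "is_cycle K \<pi> \<longleftrightarrow> (\<forall>i. (\<pi> i, \<pi> (Suc i)) \<in> R K) \<and> (\<forall>i. \<exists>j>i. \<pi> j = \<pi> 0)"

definition Cyc :: "('ap, 'w) kripke \<Rightarrow> 'w \<Rightarrow> (nat \<Rightarrow> 'w) set" where
  "Cyc K w = {\<pi> \<in> Pth K w. is_cycle K \<pi>}"

datatype 'ap sform =
    Atom 'ap
  | SNot "'ap sform"
  | SAnd "'ap sform" "'ap sform"
  | SOr "'ap sform" "'ap sform"
  | Ex "'ap pform"
  | All "'ap pform"
  | ExC "'ap pform"
  | AllC "'ap pform"
and 'ap pform =
    State "'ap sform"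
  | PNot "'ap pform"
  | PAnd "'ap pform" "'ap pform"
  | POr "'ap pform" "'ap pform"
  | Next "'ap pform"
  | Until "'ap pform" "'ap pform"

primrec sat_s :: "('ap, 'w) kripke \<Rightarrow> 'w \<Rightarrow> 'ap sform \<Rightarrow> bool"
and sat_p :: "('ap, 'w) kripke \<Rightarrow> (nat \<Rightarrow> 'w) \<Rightarrow> nat \<Rightarrow> 'ap pform \<Rightarrow> bool" where
  "sat_s K w (Atom p) = (p \<in> L K w)"
| "sat_s K w (SNot \<phi>) = (\<not> sat_s K w \<phi>)"
| "sat_s K w (SAnd \<phi>1 \<phi>2) = (sat_s K w \<phi>1 \<and> sat_s K w \<phi>2)"
| "sat_s K w (SOr \<phi>1 \<phi>2) = (sat_s K w \<phi>1 \<or> sat_s K w \<phi>2)"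
| "sat_s K w (Ex \<psi>) = (\<exists>\<pi> \<in> Pth K w. sat_p K \<pi> 0 \<psi>)"
| "sat_s K w (All \<psi>) = (\<forall>\<pi> \<in> Pth K w. sat_p K \<pi> 0 \<psi>)"
| "sat_s K w (ExC \<psi>) = (\<exists>\<pi> \<in> Cyc K w. sat_p K \<pi> 0 \<psi>)"
| "sat_s K w (AllC \<psi>) = (\<forall>\<pi> \<in> Cyc K w. sat_p K \<pi> 0 \<psi>)"
| "sat_p K \<pi> i (State \<phi>) = sat_s K (\<pi> i) \<phi>"
| "sat_p K \<pi> i (PNot \<psi>) = (\<not> sat_p K \<pi> i \<psi>)"
| "sat_p K \<pi> i (PAnd \<psi>1 \<psi>2) = (sat_p K \<pi> i \<psi>1 \<and> sat_p K \<pi> i \<psi>2)"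
| "sat_p K \<pi> i (POr \<psi>1 \<psi>2) = (sat_p K \<pi> i \<psi>1 \<or> sat_p K \<pi> i \<psi>2)"
| "sat_p K \<pi> i (Next \<psi>) = sat_p K \<pi> (Suc i) \<psi>"
| "sat_p K \<pi> i (Until \<psi>1 \<psi>2) =
     (\<exists>k. sat_p K \<pi> (i + k) \<psi>2 \<and> (\<forall>j<k. sat_p K \<pi> (i + j) \<psi>1))"

definition models :: "('ap, 'w) kripke \<Rightarrow> 'ap sform \<Rightarrow> bool" where
  "models K \<phi> \<longleftrightarrow> sat_s K (init K) \<phi>"

definition cycle_bisim ::
  "('ap, 'v) kripke \<Rightarrow> ('ap, 'w) kripke \<Rightarrow> ('v \<times> 'w) set \<Rightarrow> bool" where
  "cycle_bisim K1 K2 B \<longleftrightarrow>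
     B \<subseteq> W K1 \<times> W K2 \<and> (init K1, init K2) \<in> B \<and>
     (\<forall>(w1, w2) \<in> B.
        L K1 w1 = L K2 w2 \<and>
        (\<forall>v1. (w1, v1) \<in> R K1 \<longrightarrow> (\<exists>v2. (w2, v2) \<in> R K2 \<and> (v1, v2) \<in> B)) \<and>
        (\<forall>v2. (w2, v2) \<in> R K2 \<longrightarrow> (\<exists>v1. (w1, v1) \<in> R K1 \<and> (v1, v2) \<in> B)) \<and>
        (\<forall>\<pi>1 \<in> Cyc K1 w1. \<exists>\<pi>2 \<in> Cyc K2 w2. \<forall>i. (\<pi>1 i, \<pi>2 i) \<in> B) \<and>
        (\<forall>\<pi>2 \<in> Cyc K2 w2. \<exists>\<pi>1 \<in> Cyc K1 w1. \<forall>i. (\<pi>1 i, \<pi>2 i) \<in> B))"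

datatype tag = New | Cycle

text \<open>Sequences are lists; the last letter of a sequence is the last list element.\<close>
definition pr :: "('ap, 'w) kripke \<Rightarrow> ('w \<times> tag) list \<Rightarrow> 'w" where
  "pr K ws = (if ws = [] then init K else fst (last ws))"

definition init_cycle_state :: "('w \<times> tag) list \<Rightarrow> ('w \<times> tag) list \<Rightarrow> bool" where
  "init_cycle_state ws us \<longleftrightarrow>
     (\<exists>v1 vs. ws = us @ [(v1, New)] @ map (\<lambda>v. (v, Cycle)) vs)"

definition Rbul :: "('ap, 'w) kripke \<Rightarrow> (('w \<times> tag) list \<times> ('w \<times> tag) list) set" where
  "Rbul K = {(ws, ws'). \<exists>v. (pr K ws, v) \<in> R K \<and>
      (ws' = ws @ [(v, New)]
       \<or> (\<exists>us. init_cycle_state ws us \<and> pr K us \<noteq> v \<and> ws' = ws @ [(v, Cycle)])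
       \<or> (\<exists>us. init_cycle_state ws us \<and> pr K us = v \<and> ws' = us))}"

definition Wbul :: "('ap, 'w) kripke \<Rightarrow> ('w \<times> tag) list set" where
  "Wbul K = {ws. ([], ws) \<in> (Rbul K)\<^sup>*}"

definition unwinding :: "('ap, 'w) kripke \<Rightarrow> ('ap, ('w \<times> tag) list) kripke" where
  "unwinding K =
     \<lparr> AP = AP K, W = Wbul K, R = Rbul K \<inter> (Wbul K \<times> Wbul K),
       L = (\<lambda>ws. L K (pr K ws)), init = [] \<rparr>"

end

theory Submission
  imports Defs
begin

text \<open>
  Cycle-bisimilar structures agree on all CTL*\<open>_cd\<close> formulas: by induction on formulas,
  since clauses (b) and (c) let paths be lifted step by step along the relation and clauses
  (d) and (e) do the same for cycles.

  The projection \<open>pr\<close> is a cycle-bisimulation between the unwinding and \<open>K\<close>: edges and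
  cycles of the unwinding project to edges and cycles of \<open>K\<close>, and every edge of \<open>K\<close> lifts to
  a forward \<open>New\<close> edge.  A cycle of \<open>K\<close> from \<open>pr ws\<close> is lifted by leaving \<open>ws\<close> with a \<open>New\<close>
  edge, continuing with \<open>Cycle\<close> edges, and taking the back edge to \<open>ws\<close> whenever the cycle
  revisits \<open>pr ws\<close>; as it does so infinitely often, the lifted path is again a cycle.
\<close>

subsection \<open>Cycle-bisimulations preserve CTL*\<open>_cd\<close>\<close>

lemma path_lift:
  assumes "(x, y) \<in> B" and "\<forall>i. (f i, f (Suc i)) \<in> Ra" and "f 0 = x"
    and forth: "\<And>a b a'. (a, b) \<in> B \<Longrightarrow> (a, a') \<in> Ra \<Longrightarrow> \<exists>b'. (b, b') \<in> Rb \<and> (a', b') \<in> B"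
  shows "\<exists>g. g 0 = y \<and> (\<forall>i. (g i, g (Suc i)) \<in> Rb) \<and> (\<forall>i. (f i, g i) \<in> B)"
proof -
  define next_of where "next_of i b = (SOME b'. (b, b') \<in> Rb \<and> (f (Suc i), b') \<in> B)" for i b
  define g where "g = rec_nat y next_of"
  have next_of: "(b, next_of i b) \<in> Rb \<and> (f (Suc i), next_of i b) \<in> B"
    if "(f i, b) \<in> B" for i b
    unfolding next_of_def by (rule someI_ex) (use forth[OF that] assms(2) in blast)
  have related: "(f i, g i) \<in> B" for i
    by (induction i) (use assms(1,3) next_of in \<open>auto simp: g_def\<close>)
  have "(g i, g (Suc i)) \<in> Rb" for i
    using next_of[OF related] by (simp add: g_def)
  moreover have "g 0 = y" by (simp add: g_def)
  ultimately show ?thesis using related by blast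
qed

lemma cycle_bisimI:
  assumes "B \<subseteq> W K1 \<times> W K2" and "(init K1, init K2) \<in> B"
    and "\<And>w1 w2. (w1, w2) \<in> B \<Longrightarrow> L K1 w1 = L K2 w2"
    and "\<And>w1 w2 v1. (w1, w2) \<in> B \<Longrightarrow> (w1, v1) \<in> R K1 \<Longrightarrow> \<exists>v2. (w2, v2) \<in> R K2 \<and> (v1, v2) \<in> B"
    and "\<And>w1 w2 v2. (w1, w2) \<in> B \<Longrightarrow> (w2, v2) \<in> R K2 \<Longrightarrow> \<exists>v1. (w1, v1) \<in> R K1 \<and> (v1, v2) \<in> B"
    and "\<And>w1 w2 \<pi>1. (w1, w2) \<in> B \<Longrightarrow> \<pi>1 \<in> Cyc K1 w1 \<Longrightarrow> \<exists>\<pi>2 \<in> Cyc K2 w2. \<forall>i. (\<pi>1 i, \<pi>2 i) \<in> B"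
    and "\<And>w1 w2 \<pi>2. (w1, w2) \<in> B \<Longrightarrow> \<pi>2 \<in> Cyc K2 w2 \<Longrightarrow> \<exists>\<pi>1 \<in> Cyc K1 w1. \<forall>i. (\<pi>1 i, \<pi>2 i) \<in> B"
  shows "cycle_bisim K1 K2 B"
  unfolding cycle_bisim_def using assms by auto

lemma cycle_bisim_clauses:
  assumes "cycle_bisim K1 K2 B" and "(w1, w2) \<in> B"
  shows "L K1 w1 = L K2 w2"
    and "(w1, v1) \<in> R K1 \<Longrightarrow> \<exists>v2. (w2, v2) \<in> R K2 \<and> (v1, v2) \<in> B"
    and "(w2, v2) \<in> R K2 \<Longrightarrow> \<exists>v1. (w1, v1) \<in> R K1 \<and> (v1, v2) \<in> B"
    and "\<forall>\<pi>1 \<in> Cyc K1 w1. \<exists>\<pi>2 \<in> Cyc K2 w2. \<forall>i. (\<pi>1 i, \<pi>2 i) \<in> B"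
    and "\<forall>\<pi>2 \<in> Cyc K2 w2. \<exists>\<pi>1 \<in> Cyc K1 w1. \<forall>i. (\<pi>1 i, \<pi>2 i) \<in> B"
  using assms unfolding cycle_bisim_def by auto

lemma cycle_bisim_Pth:
  assumes B: "cycle_bisim K1 K2 B" and "(w1, w2) \<in> B"
  shows "\<forall>\<pi>1 \<in> Pth K1 w1. \<exists>\<pi>2 \<in> Pth K2 w2. \<forall>i. (\<pi>1 i, \<pi>2 i) \<in> B"
    and "\<forall>\<pi>2 \<in> Pth K2 w2. \<exists>\<pi>1 \<in> Pth K1 w1. \<forall>i. (\<pi>1 i, \<pi>2 i) \<in> B"
proof -
  show "\<forall>\<pi>1 \<in> Pth K1 w1. \<exists>\<pi>2 \<in> Pth K2 w2. \<forall>i. (\<pi>1 i, \<pi>2 i) \<in> B"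
  proof
    fix \<pi>1 assume "\<pi>1 \<in> Pth K1 w1"
    then obtain \<pi>2 where "\<pi>2 0 = w2" "\<forall>i. (\<pi>2 i, \<pi>2 (Suc i)) \<in> R K2" "\<forall>i. (\<pi>1 i, \<pi>2 i) \<in> B"
      using path_lift[of w1 w2 B \<pi>1 "R K1" "R K2"] assms(2) cycle_bisim_clauses(2)[OF B]
      unfolding Pth_def by blast
    then show "\<exists>\<pi>2 \<in> Pth K2 w2. \<forall>i. (\<pi>1 i, \<pi>2 i) \<in> B" by (auto simp: Pth_def)
  qed
  show "\<forall>\<pi>2 \<in> Pth K2 w2. \<exists>\<pi>1 \<in> Pth K1 w1. \<forall>i. (\<pi>1 i, \<pi>2 i) \<in> B"
  proof
    fix \<pi>2 assume "\<pi>2 \<in> Pth K2 w2"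
    then obtain \<pi>1 where "\<pi>1 0 = w1" "\<forall>i. (\<pi>1 i, \<pi>1 (Suc i)) \<in> R K1" "\<forall>i. (\<pi>2 i, \<pi>1 i) \<in> B\<inverse>"
      using path_lift[of w2 w1 "B\<inverse>" \<pi>2 "R K2" "R K1"] assms(2) cycle_bisim_clauses(3)[OF B]
      unfolding Pth_def by blast
    then show "\<exists>\<pi>1 \<in> Pth K1 w1. \<forall>i. (\<pi>1 i, \<pi>2 i) \<in> B" by (auto simp: Pth_def)
  qed
qed

lemma quantifiers_iff_if_related:
  assumes "\<forall>x \<in> A. \<exists>y \<in> B. r x y" and "\<forall>y \<in> B. \<exists>x \<in> A. r x y"
    and "\<And>x y. r x y \<Longrightarrow> P x \<longleftrightarrow> Q y"
  shows "(\<exists>x \<in> A. P x) \<longleftrightarrow> (\<exists>y \<in> B. Q y)"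
    and "(\<forall>x \<in> A. P x) \<longleftrightarrow> (\<forall>y \<in> B. Q y)"
  using assms by blast+

lemma cycle_bisim_sat:
  assumes B: "cycle_bisim K1 K2 B"
  shows "\<forall>w1 w2. (w1, w2) \<in> B \<longrightarrow> (sat_s K1 w1 \<phi> \<longleftrightarrow> sat_s K2 w2 \<phi>)"
    and "\<forall>\<pi>1 \<pi>2 i. (\<forall>j. (\<pi>1 j, \<pi>2 j) \<in> B) \<longrightarrow> (sat_p K1 \<pi>1 i \<psi> \<longleftrightarrow> sat_p K2 \<pi>2 i \<psi>)"
proof (induct \<phi> and \<psi>)
  case (Atom p)
  show ?case using cycle_bisim_clauses(1)[OF B] by simp
next
  case (Ex \<psi>)
  show ?case
  proof (intro allI impI)
    fix w1 w2 assume w: "(w1, w2) \<in> B"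
    show "sat_s K1 w1 (Ex \<psi>) \<longleftrightarrow> sat_s K2 w2 (Ex \<psi>)"
      unfolding sat_s.simps
      by (rule quantifiers_iff_if_related(1)[OF cycle_bisim_Pth[OF B w]]) (use Ex in blast)
  qed
next
  case (All \<psi>)
  show ?case
  proof (intro allI impI)
    fix w1 w2 assume w: "(w1, w2) \<in> B"
    show "sat_s K1 w1 (All \<psi>) \<longleftrightarrow> sat_s K2 w2 (All \<psi>)"
      unfolding sat_s.simps
      by (rule quantifiers_iff_if_related(2)[OF cycle_bisim_Pth[OF B w]]) (use All in blast)
  qed
next
  case (ExC \<psi>)
  show ?case
  proof (intro allI impI)
    fix w1 w2 assume w: "(w1, w2) \<in> B"
    show "sat_s K1 w1 (ExC \<psi>) \<longleftrightarrow> sat_s K2 w2 (ExC \<psi>)"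
      unfolding sat_s.simps
      by (rule quantifiers_iff_if_related(1)[OF cycle_bisim_clauses(4,5)[OF B w]])
        (use ExC in blast)
  qed
next
  case (AllC \<psi>)
  show ?case
  proof (intro allI impI)
    fix w1 w2 assume w: "(w1, w2) \<in> B"
    show "sat_s K1 w1 (AllC \<psi>) \<longleftrightarrow> sat_s K2 w2 (AllC \<psi>)"
      unfolding sat_s.simps
      by (rule quantifiers_iff_if_related(2)[OF cycle_bisim_clauses(4,5)[OF B w]])
        (use AllC in blast)
  qed
next
  case (Until \<psi>1 \<psi>2)
  show ?case
  proof (intro allI impI)
    fix \<pi>1 \<pi>2 i assume "\<forall>j::nat. (\<pi>1 j, \<pi>2 j) \<in> B"
    then have "sat_p K1 \<pi>1 n \<psi>1 \<longleftrightarrow> sat_p K2 \<pi>2 n \<psi>1" "sat_p K1 \<pi>1 n \<psi>2 \<longleftrightarrow> sat_p K2 \<pi>2 n \<psi>2"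
      for n using Until by blast+
    then show "sat_p K1 \<pi>1 i (Until \<psi>1 \<psi>2) \<longleftrightarrow> sat_p K2 \<pi>2 i (Until \<psi>1 \<psi>2)"
      by simp
  qed
qed simp_all

lemma cycle_bisim_models_iff:
  assumes "cycle_bisim K1 K2 B"
  shows "models K1 \<phi> \<longleftrightarrow> models K2 \<phi>"
proof -
  have "(init K1, init K2) \<in> B" using assms by (simp add: cycle_bisim_def)
  then show ?thesis using cycle_bisim_sat(1)[OF assms] by (simp add: models_def)
qed

subsection \<open>The tree-like unwinding\<close>

lemma unwinding_simps [simp]:
  "W (unwinding K) = Wbul K"
  "R (unwinding K) = Rbul K \<inter> (Wbul K \<times> Wbul K)"
  "L (unwinding K) = (\<lambda>ws. L K (pr K ws))"
  "init (unwinding K) = []"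
  by (simp_all add: unwinding_def)

lemma pr_snoc [simp]: "pr K (ws @ [(v, t)]) = v"
  by (simp add: pr_def)

lemma Rbul_pr: "(ws, ws') \<in> Rbul K \<Longrightarrow> (pr K ws, pr K ws') \<in> R K"
  unfolding Rbul_def by (auto simp: pr_def)

lemma Rbul_New: "(pr K ws, v) \<in> R K \<Longrightarrow> (ws, ws @ [(v, New)]) \<in> Rbul K"
  unfolding Rbul_def by blast

lemma Rbul_Cycle:
  "\<lbrakk>(pr K ws, v) \<in> R K; init_cycle_state ws us; pr K us \<noteq> v\<rbrakk>
   \<Longrightarrow> (ws, ws @ [(v, Cycle)]) \<in> Rbul K"
  unfolding Rbul_def by blast

lemma Rbul_back:
  "\<lbrakk>(pr K ws, pr K us) \<in> R K; init_cycle_state ws us\<rbrakk> \<Longrightarrow> (ws, us) \<in> Rbul K"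
  unfolding Rbul_def by blast

lemma Nil_in_Wbul: "[] \<in> Wbul K"
  by (simp add: Wbul_def)

lemma Wbul_Rbul_closed: "ws \<in> Wbul K \<Longrightarrow> (ws, ws') \<in> Rbul K \<Longrightarrow> ws' \<in> Wbul K"
  unfolding Wbul_def by (auto intro: rtrancl_into_rtrancl)

lemma pr_in_W:
  assumes "is_kripke K" and "ws \<in> Wbul K"
  shows "pr K ws \<in> W K"
proof -
  have "([], ws) \<in> (Rbul K)\<^sup>*" using assms(2) by (simp add: Wbul_def)
  then show ?thesis
  proof (induction rule: rtrancl_induct)
    case base
    then show ?case using assms(1) by (simp add: is_kripke_def pr_def)
  next
    case (step ws ws')
    then show ?case using Rbul_pr assms(1) by (fastforce simp: is_kripke_def)
  qed
qed

lemma Cyc_unwinding_pr: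
  assumes "\<pi> \<in> Cyc (unwinding K) ws"
  shows "(\<lambda>i. pr K (\<pi> i)) \<in> Cyc K (pr K ws)"
proof -
  have start: "\<pi> 0 = ws" and step: "(\<pi> i, \<pi> (Suc i)) \<in> Rbul K" and ret: "\<exists>j>i. \<pi> j = \<pi> 0"
    for i using assms by (auto simp: Cyc_def Pth_def is_cycle_def)
  have "(pr K (\<pi> i), pr K (\<pi> (Suc i))) \<in> R K" for i
    using Rbul_pr[OF step] .
  moreover have "\<exists>j>i. pr K (\<pi> j) = pr K ws" for i
    using ret[of i] start by auto
  ultimately show ?thesis
    using start by (simp add: Cyc_def Pth_def is_cycle_def)
qed

lemma Cyc_unwinding_in_Wbul:
  assumes "\<pi> \<in> Cyc (unwinding K) ws" and "ws \<in> Wbul K"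
  shows "\<pi> i \<in> Wbul K"
proof (cases i)
  case 0
  then show ?thesis using assms by (simp add: Cyc_def Pth_def)
next
  case (Suc j)
  have "(\<pi> j, \<pi> (Suc j)) \<in> R (unwinding K)"
    using assms(1) by (simp add: Cyc_def Pth_def)
  then show ?thesis using Suc by simp
qed

definition unwind_cycle ::
  "('ap, 'w) kripke \<Rightarrow> ('w \<times> tag) list \<Rightarrow> (nat \<Rightarrow> 'w) \<Rightarrow> nat \<Rightarrow> ('w \<times> tag) list" where
  "unwind_cycle K ws \<pi> = rec_nat ws (\<lambda>i us.
     if us = ws then ws @ [(\<pi> (Suc i), New)]
     else if \<pi> (Suc i) = pr K ws then ws
     else us @ [(\<pi> (Suc i), Cycle)])"

lemma unwind_cycle_0 [simp]: "unwind_cycle K ws \<pi> 0 = ws"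
  by (simp add: unwind_cycle_def)

lemma unwind_cycle_Suc:
  "unwind_cycle K ws \<pi> (Suc i) =
     (if unwind_cycle K ws \<pi> i = ws then ws @ [(\<pi> (Suc i), New)]
      else if \<pi> (Suc i) = pr K ws then ws
      else unwind_cycle K ws \<pi> i @ [(\<pi> (Suc i), Cycle)])"
  by (simp add: unwind_cycle_def)

lemma init_cycle_state_New: "init_cycle_state (ws @ [(v, New)]) ws"
  unfolding init_cycle_state_def by (rule exI[of _ v], rule exI[of _ "[]"]) simp

lemma init_cycle_state_snoc_Cycle:
  "init_cycle_state us ws \<Longrightarrow> init_cycle_state (us @ [(v, Cycle)]) ws"
  unfolding init_cycle_state_def by (auto intro!: exI[of _ "_ @ [v]"])

lemma unwind_cycle_shape:
  assumes "\<pi> 0 = pr K ws"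
  shows "(unwind_cycle K ws \<pi> i = ws \<or> init_cycle_state (unwind_cycle K ws \<pi> i) ws)
         \<and> pr K (unwind_cycle K ws \<pi> i) = \<pi> i"
proof (induction i)
  case 0
  then show ?case using assms by simp
next
  case (Suc i)
  consider "unwind_cycle K ws \<pi> i = ws"
    | "unwind_cycle K ws \<pi> i \<noteq> ws" "\<pi> (Suc i) = pr K ws"
    | "unwind_cycle K ws \<pi> i \<noteq> ws" "\<pi> (Suc i) \<noteq> pr K ws"
    by blast
  then show ?case
  proof cases
    case 1
    then show ?thesis by (simp add: unwind_cycle_Suc init_cycle_state_New)
  next
    case 2
    then show ?thesis by (simp add: unwind_cycle_Suc)
  next
    case 3
    then show ?thesis
      using Suc.IH by (simp add: unwind_cycle_Suc init_cycle_state_snoc_Cycle)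
  qed
qed

lemma unwind_cycle_Rbul:
  assumes start: "\<pi> 0 = pr K ws" and edges: "\<forall>i. (\<pi> i, \<pi> (Suc i)) \<in> R K"
  shows "(unwind_cycle K ws \<pi> i, unwind_cycle K ws \<pi> (Suc i)) \<in> Rbul K"
proof -
  let ?us = "unwind_cycle K ws \<pi> i"
  have shape: "?us = ws \<or> init_cycle_state ?us ws" and edge: "(pr K ?us, \<pi> (Suc i)) \<in> R K"
    using unwind_cycle_shape[of \<pi> K ws i, OF start] edges by auto
  consider "?us = ws" | "?us \<noteq> ws" "\<pi> (Suc i) = pr K ws" | "?us \<noteq> ws" "\<pi> (Suc i) \<noteq> pr K ws"
    by blast
  then show ?thesis
  proof cases
    case 1
    then show ?thesis using edge by (simp add: unwind_cycle_Suc Rbul_New)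
  next
    case 2
    then show ?thesis using edge shape by (simp add: unwind_cycle_Suc Rbul_back)
  next
    case 3
    then show ?thesis
      using shape Rbul_Cycle[OF edge _ not_sym[OF 3(2)]] by (simp add: unwind_cycle_Suc)
  qed
qed

lemma unwind_cycle_returns:
  assumes "\<forall>i. \<exists>j>i. \<pi> j = pr K ws"
  shows "\<exists>j>i. unwind_cycle K ws \<pi> j = ws"
proof -
  obtain k where "k > i" and "\<pi> (Suc k) = pr K ws"
    using assms by (metis Suc_lessE)
  then have "unwind_cycle K ws \<pi> k = ws \<or> unwind_cycle K ws \<pi> (Suc k) = ws"
    by (simp add: unwind_cycle_Suc)
  then show ?thesis using \<open>k > i\<close> less_SucI by blast
qed

lemma Cyc_unwinding_lift:
  assumes ws: "ws \<in> Wbul K" and \<pi>: "\<pi> \<in> Cyc K (pr K ws)"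
  shows "unwind_cycle K ws \<pi> \<in> Cyc (unwinding K) ws"
    and "pr K (unwind_cycle K ws \<pi> i) = \<pi> i"
proof -
  let ?f = "unwind_cycle K ws \<pi>"
  have start: "\<pi> 0 = pr K ws" and edges: "\<forall>i. (\<pi> i, \<pi> (Suc i)) \<in> R K"
    and returns: "\<forall>i. \<exists>j>i. \<pi> j = pr K ws"
    using \<pi> by (auto simp: Cyc_def Pth_def is_cycle_def)
  have step: "(?f i, ?f (Suc i)) \<in> Rbul K" for i
    using unwind_cycle_Rbul[OF start edges] .
  have "?f i \<in> Wbul K" for i
    by (induction i) (use ws step Wbul_Rbul_closed in auto)
  then show "?f \<in> Cyc (unwinding K) ws"
    using step unwind_cycle_returns[OF returns]
    by (simp add: Cyc_def Pth_def is_cycle_def)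
  show "pr K (?f i) = \<pi> i"
    using unwind_cycle_shape[of \<pi> K ws i, OF start] by blast
qed

lemma unwinding_cycle_bisim:
  assumes "is_kripke K"
  shows "cycle_bisim (unwinding K) K {(ws, pr K ws) | ws. ws \<in> W (unwinding K)}"
    (is "cycle_bisim _ _ ?B")
proof (rule cycle_bisimI)
  have in_B: "(ws, w) \<in> ?B \<longleftrightarrow> ws \<in> Wbul K \<and> w = pr K ws" for ws w
    by auto
  show "?B \<subseteq> W (unwinding K) \<times> W K"
    using pr_in_W[OF assms] in_B by auto
  show "(init (unwinding K), init K) \<in> ?B"
    unfolding in_B by (simp add: Nil_in_Wbul pr_def)
  show "L (unwinding K) ws = L K w" if "(ws, w) \<in> ?B" for ws w
    using that unfolding in_B by simp
  show "\<exists>v. (w, v) \<in> R K \<and> (ws', v) \<in> ?B"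
    if "(ws, w) \<in> ?B" and "(ws, ws') \<in> R (unwinding K)" for ws w ws'
    using that unfolding in_B by (auto intro: Rbul_pr)
  show "\<exists>ws'. (ws, ws') \<in> R (unwinding K) \<and> (ws', v) \<in> ?B"
    if "(ws, w) \<in> ?B" and "(w, v) \<in> R K" for ws w v
  proof -
    have ws: "ws \<in> Wbul K" and edge: "(ws, ws @ [(v, New)]) \<in> Rbul K"
      using that Rbul_New unfolding in_B by auto
    show ?thesis
      unfolding in_B using ws edge Wbul_Rbul_closed[OF ws edge]
      by (intro exI[of _ "ws @ [(v, New)]"]) simp
  qed
  show "\<exists>\<pi>2 \<in> Cyc K w. \<forall>i. (\<pi>1 i, \<pi>2 i) \<in> ?B"
    if "(ws, w) \<in> ?B" and "\<pi>1 \<in> Cyc (unwinding K) ws" for ws w \<pi>1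
    using that Cyc_unwinding_pr[OF that(2)] Cyc_unwinding_in_Wbul[OF that(2)]
    unfolding in_B by auto
  show "\<exists>\<pi>1 \<in> Cyc (unwinding K) ws. \<forall>i. (\<pi>1 i, \<pi>2 i) \<in> ?B"
    if "(ws, w) \<in> ?B" and "\<pi>2 \<in> Cyc K w" for ws w \<pi>2
  proof -
    have ws: "ws \<in> Wbul K" and \<pi>2: "\<pi>2 \<in> Cyc K (pr K ws)"
      using that unfolding in_B by auto
    show ?thesis
      unfolding in_B
      using Cyc_unwinding_lift[OF ws \<pi>2] Cyc_unwinding_in_Wbul[OF _ ws] by metis
  qed
qed

theorem mainTheorem3:
  fixes K :: "('ap, 'w) kripke"
  assumes "is_kripke K"
  shows "cycle_bisim (unwinding K) K {(ws, pr K ws) | ws. ws \<in> W (unwinding K)}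
         \<and> (\<forall>\<phi> :: 'ap sform. models K \<phi> \<longleftrightarrow> models (unwinding K) \<phi>)"
  using unwinding_cycle_bisim[OF assms] cycle_bisim_models_iff by blast

end
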